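(* Let $X$ be a finite uniconnected cycle set whose permutation group $\mathcal{G}(X)$ is a Dedekind group (every subgroup is normal). Then $X$ has finite multipermutation level.
   Context: A (non-degenerate) cycle set is a set $X$ with an operation such that each $\sigma_x:y\mapsto x\cdot y$ is bijective, $(x\cdot y)\cdot(x\cdot z)=(y\cdot x)\cdot(y\cdot z)$, and $x\mapsto x\cdot x$ is bijective. $\mathcal{G}(X)$ is the permutation group generated by $\{\sigma_x\mid x\in X\}$; $X$ is uniconnected if $\mathcal{G}(X)$ acts regularly on $X$. $\mathrm{Ret}(X)$ is the quotient of $X$ by $x\sim y\iff\sigma_x=\sigma_y$; $\mathrm{Ret}^0(X)=X$, $\mathrm{Ret}^i(X)=\mathrm{Ret}(\mathrm{Ret}^{i-1}(X))$; $X$ has finite multipermutation level if $|\mathrm{Ret}^n(X)|=1$ for some $n$. *)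

theory Defs
  imports "HOL-Algebra.Algebra"
begin

definition lmult :: "'a set \<Rightarrow> ('a \<Rightarrow> 'a \<Rightarrow> 'a) \<Rightarrow> 'a \<Rightarrow> ('a \<Rightarrow> 'a)" where
  "lmult A m x = (\<lambda>y\<in>A. m x y)"

definition cycle_set :: "'a set \<Rightarrow> ('a \<Rightarrow> 'a \<Rightarrow> 'a) \<Rightarrow> bool" where
  "cycle_set A m \<longleftrightarrow>
     (\<forall>x\<in>A. \<forall>y\<in>A. m x y \<in> A) \<and>
     (\<forall>x\<in>A. bij_betw (m x) A A) \<and>
     (\<forall>x\<in>A. \<forall>y\<in>A. \<forall>z\<in>A. m (m x y) (m x z) = m (m y x) (m y z))"

definition nondeg_cycle_set :: "'a set \<Rightarrow> ('a \<Rightarrow> 'a \<Rightarrow> 'a) \<Rightarrow> bool" where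
  "nondeg_cycle_set A m \<longleftrightarrow> cycle_set A m \<and> bij_betw (\<lambda>x. m x x) A A"

definition perm_group :: "'a set \<Rightarrow> ('a \<Rightarrow> 'a \<Rightarrow> 'a) \<Rightarrow> ('a \<Rightarrow> 'a) monoid" where
  "perm_group A m = (BijGroup A)\<lparr>carrier := generate (BijGroup A) (lmult A m ` A)\<rparr>"

definition uniconnected :: "'a set \<Rightarrow> ('a \<Rightarrow> 'a \<Rightarrow> 'a) \<Rightarrow> bool" where
  "uniconnected A m \<longleftrightarrow> A \<noteq> {} \<and>
     (\<forall>x\<in>A. \<forall>y\<in>A. \<exists>!g. g \<in> carrier (perm_group A m) \<and> g x = y)"

definition dedekind_group :: "('g, 'b) monoid_scheme \<Rightarrow> bool" where
  "dedekind_group G \<longleftrightarrow> group G \<and> (\<forall>H. subgroup H G \<longrightarrow> H \<lhd> G)"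

text \<open>Ret^i(A) is represented as the quotient of A by the
  equivalence relation ret_eq i: x ~_0 y iff x = y, and x ~_(i+1) y iff the
  classes of x and y in Ret^i(A) have the same left multiplication on Ret^i(A),
  i.e. [x z]_i = [y z]_i for all z in A (the operation on Ret^i(A) being the
  induced one [x]_i [z]_i = [x z]_i).\<close>
fun ret_eq :: "'a set \<Rightarrow> ('a \<Rightarrow> 'a \<Rightarrow> 'a) \<Rightarrow> nat \<Rightarrow> 'a \<Rightarrow> 'a \<Rightarrow> bool" where
  "ret_eq A m 0 x y = (x = y)"
| "ret_eq A m (Suc i) x y = (\<forall>z\<in>A. ret_eq A m i (m x z) (m y z))"

definition ret_rel :: "'a set \<Rightarrow> ('a \<Rightarrow> 'a \<Rightarrow> 'a) \<Rightarrow> nat \<Rightarrow> ('a \<times> 'a) set" where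
  "ret_rel A m i = {(x, y). x \<in> A \<and> y \<in> A \<and> ret_eq A m i x y}"

definition Ret_iter :: "'a set \<Rightarrow> ('a \<Rightarrow> 'a \<Rightarrow> 'a) \<Rightarrow> nat \<Rightarrow> 'a set set" where
  "Ret_iter A m i = A // ret_rel A m i"

definition finite_mpl :: "'a set \<Rightarrow> ('a \<Rightarrow> 'a \<Rightarrow> 'a) \<Rightarrow> bool" where
  "finite_mpl A m \<longleftrightarrow> (\<exists>n. card (Ret_iter A m n) = 1)"

end

theory Submission
  imports Defs
begin

text \<open>Let \<open>R\<close> be a congruence of the cycle set with more than one class (e.g. the kernel of
  \<open>A \<rightarrow> Ret\<^sup>n(A)\<close>) and fix \<open>x0\<close>. The stabilizer in \<open>G(A)\<close> of the \<open>R\<close>-class of \<open>x0\<close> is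
  normal because \<open>G(A)\<close> is Dedekind, so by transitivity it fixes every \<open>R\<close>-class. Hence the class
  of \<open>x x0\<close> determines \<open>\<sigma>\<^sub>x\<close> modulo \<open>R\<close>, i.e. \<open>x \<mapsto> [x x0]\<close> factors through the next
  retraction, and it never hits \<open>[x0]\<close>: otherwise the elements acting trivially modulo \<open>R\<close> would
  form a nonempty set closed under every \<open>\<sigma>\<^sub>y\<close>, hence all of \<open>A\<close>, and \<open>R\<close> would be total.
  So each retraction strictly lowers the number of classes until a single one is left.
  Only finiteness and transitivity of \<open>G(A)\<close> are used, not non-degeneracy.\<close>

lemma (in group) subgroup_of_finite_submonoid:
  assumes "finite H" "H \<subseteq> carrier G" "\<one> \<in> H" "\<And>x y. x \<in> H \<Longrightarrow> y \<in> H \<Longrightarrow> x \<otimes> y \<in> H"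
  shows "subgroup H G"
proof (rule subgroupI)
  fix x assume x: "x \<in> H"
  then have xG: "x \<in> carrier G" using assms(2) by blast
  have "inj_on ((\<otimes>) x) H"
    using assms(2) xG by (auto intro!: inj_onI simp: subset_iff)
  then have "(\<otimes>) x ` H = H"
    using assms(1,4) x by (intro endo_inj_surj) auto
  then obtain y where y: "y \<in> H" "x \<otimes> y = \<one>"
    using assms(3) by (metis imageE)
  then have "inv x = y"
    using assms(2) xG by (metis inv_comm inv_equality subsetD)
  then show "inv x \<in> H" using y by simp
qed (use assms in auto)

lemma finite_Bij: "finite A \<Longrightarrow> finite (Bij A)"
  by (rule finite_subset[of _ "A \<rightarrow>\<^sub>E A"])
     (auto simp: Bij_def bij_betw_def extensional_def intro!: finite_PiE)

lemma card_image_le_if_factors: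
  assumes "finite A" and factors: "\<And>x y. x \<in> A \<Longrightarrow> y \<in> A \<Longrightarrow> f x = f y \<Longrightarrow> g x = g y"
  shows "card (g ` A) \<le> card (f ` A)"
proof -
  have "g x = (g \<circ> inv_into A f) (f x)" if "x \<in> A" for x
    using factors[OF inv_into_into[of "f x" f A] that] f_inv_into_f[of "f x" f A] that by simp
  then have "g ` A = (g \<circ> inv_into A f) ` f ` A"
    by (simp add: image_image cong: image_cong)
  then show ?thesis
    using assms(1) card_image_le finite_imageI by metis
qed

lemma quotient_eq_singleton_if_total:
  assumes "equiv A R" "A \<noteq> {}" "A \<times> A \<subseteq> R"
  shows "A // R = {A}"
proof -
  have "R `` {x} = A" if "x \<in> A" for x
    using assms(3) equiv_type[OF assms(1)] that by blast
  then show ?thesis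
    unfolding quotient_def using assms(2) by blast
qed

lemma ex_eq_if_decreasing_while_neq:
  fixes f :: "nat \<Rightarrow> nat"
  assumes "\<And>n. f n \<noteq> c \<Longrightarrow> f (Suc n) < f n"
  shows "\<exists>n. f n = c"
proof (rule ccontr)
  assume "\<nexists>n. f n = c"
  then have decreasing: "f (Suc n) < f n" for n
    using assms by blast
  have "f n + n \<le> f 0" for n
  proof (induction n)
    case (Suc n)
    then show ?case using decreasing[of n] by simp
  qed simp
  from this[of "Suc (f 0)"] show False by simp
qed

definition perm_group_transitive :: "'a set \<Rightarrow> ('a \<Rightarrow> 'a \<Rightarrow> 'a) \<Rightarrow> bool" where
  "perm_group_transitive A m \<longleftrightarrow> (\<forall>a\<in>A. \<forall>b\<in>A. \<exists>g\<in>carrier (perm_group A m). g a = b)"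

lemma uniconnected_imp_perm_group_transitive:
  "uniconnected A m \<Longrightarrow> perm_group_transitive A m"
  unfolding uniconnected_def perm_group_transitive_def by blast

definition cycle_congruence :: "'a set \<Rightarrow> ('a \<Rightarrow> 'a \<Rightarrow> 'a) \<Rightarrow> ('a \<times> 'a) set \<Rightarrow> bool" where
  "cycle_congruence A m R \<longleftrightarrow> equiv A R \<and>
     (\<forall>(x, y)\<in>R. \<forall>z\<in>A. (m z x, m z y) \<in> R \<and> (m x z, m y z) \<in> R)"

text \<open>The kernel of \<open>x \<mapsto> \<sigma>\<^sub>x\<close> on the quotient cycle set \<open>A // R\<close>, so that
  \<open>A // retract_rel A m R\<close> is \<open>Ret(A // R)\<close>.\<close>
definition retract_rel :: "'a set \<Rightarrow> ('a \<Rightarrow> 'a \<Rightarrow> 'a) \<Rightarrow> ('a \<times> 'a) set \<Rightarrow> ('a \<times> 'a) set" where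
  "retract_rel A m R = {(x, y). x \<in> A \<and> y \<in> A \<and> (\<forall>z\<in>A. (m x z, m y z) \<in> R)}"

lemma cycle_congruence_equiv: "cycle_congruence A m R \<Longrightarrow> equiv A R"
  unfolding cycle_congruence_def by blast

lemma cycle_congruence_left:
  "cycle_congruence A m R \<Longrightarrow> (x, y) \<in> R \<Longrightarrow> z \<in> A \<Longrightarrow> (m z x, m z y) \<in> R"
  unfolding cycle_congruence_def by blast

lemma cycle_congruence_right:
  "cycle_congruence A m R \<Longrightarrow> (x, y) \<in> R \<Longrightarrow> z \<in> A \<Longrightarrow> (m x z, m y z) \<in> R"
  unfolding cycle_congruence_def by blast

definition block_stabilizer :: "'a set \<Rightarrow> ('a \<Rightarrow> 'a \<Rightarrow> 'a) \<Rightarrow> ('a \<times> 'a) set \<Rightarrow> 'a \<Rightarrow> ('a \<Rightarrow> 'a) set" where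
  "block_stabilizer A m R x0 = {g \<in> carrier (perm_group A m). (g x0, x0) \<in> R}"

locale cycset =
  fixes A :: "'a set" and m :: "'a \<Rightarrow> 'a \<Rightarrow> 'a"
  assumes cycle_set: "cycle_set A m"
begin

abbreviation G where "G \<equiv> perm_group A m"

lemma mult_closed: "x \<in> A \<Longrightarrow> y \<in> A \<Longrightarrow> m x y \<in> A"
  using cycle_set unfolding cycle_set_def by blast

lemma bij_lmult: "x \<in> A \<Longrightarrow> bij_betw (m x) A A"
  using cycle_set unfolding cycle_set_def by blast

lemma cycle_identity: "x \<in> A \<Longrightarrow> y \<in> A \<Longrightarrow> z \<in> A \<Longrightarrow> m (m x y) (m x z) = m (m y x) (m y z)"
  using cycle_set unfolding cycle_set_def by blast

lemma lmult_in_Bij: "x \<in> A \<Longrightarrow> lmult A m x \<in> Bij A"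
  using bij_betw_cong[of A "lmult A m x" "m x" A] bij_lmult
  by (auto simp: Bij_def lmult_def)

lemma lmult_in_perm_group: "x \<in> A \<Longrightarrow> lmult A m x \<in> carrier G"
  by (auto simp: perm_group_def intro: generate.incl)

lemma subgroup_perm_group: "subgroup (carrier G) (BijGroup A)"
proof -
  have "lmult A m ` A \<subseteq> carrier (BijGroup A)"
    using lmult_in_Bij by (auto simp: BijGroup_def)
  then show ?thesis
    unfolding perm_group_def by (simp add: group.generate_is_subgroup[OF group_BijGroup])
qed

lemma group_perm_group: "group G"
  using subgroup.subgroup_is_group[OF subgroup_perm_group group_BijGroup]
  by (simp add: perm_group_def)

lemma perm_group_in_Bij: "g \<in> carrier G \<Longrightarrow> g \<in> Bij A"
  using subgroup.subset[OF subgroup_perm_group] by (auto simp: BijGroup_def)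

lemma perm_group_apply_closed: "g \<in> carrier G \<Longrightarrow> z \<in> A \<Longrightarrow> g z \<in> A"
  using perm_group_in_Bij by (auto simp: Bij_def bij_betw_def)

lemma perm_group_mult_eq: "g \<otimes>\<^bsub>G\<^esub> h = g \<otimes>\<^bsub>BijGroup A\<^esub> h"
  by (simp add: perm_group_def)

lemma perm_group_mult_apply:
  "g \<in> carrier G \<Longrightarrow> h \<in> carrier G \<Longrightarrow> z \<in> A \<Longrightarrow> (g \<otimes>\<^bsub>G\<^esub> h) z = g (h z)"
  by (simp add: perm_group_mult_eq perm_group_in_Bij BijGroup_def compose_def)

lemma perm_group_one_apply: "z \<in> A \<Longrightarrow> \<one>\<^bsub>G\<^esub> z = z"
  by (simp add: perm_group_def BijGroup_def)

lemma perm_group_inv_apply: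
  assumes "g \<in> carrier G" "z \<in> A"
  shows "(inv\<^bsub>G\<^esub> g) (g z) = z" and "g ((inv\<^bsub>G\<^esub> g) z) = z"
proof -
  interpret group G by (rule group_perm_group)
  show "(inv\<^bsub>G\<^esub> g) (g z) = z" "g ((inv\<^bsub>G\<^esub> g) z) = z"
    using perm_group_mult_apply[of _ _ z] perm_group_one_apply[of z] assms
    by (metis inv_closed l_inv, metis inv_closed r_inv)
qed

end

locale finite_cycset = cycset +
  assumes finite_carrier: "finite A"
begin

text \<open>In a finite group every subset closed under products is a subgroup, so no inverses of
  generators are needed in this induction.\<close>
lemma perm_group_induct [consumes 1, case_names one lmult mult]:
  assumes g: "g \<in> carrier G"
    and one: "P \<one>\<^bsub>G\<^esub>"
    and lmult: "\<And>x. x \<in> A \<Longrightarrow> P (lmult A m x)"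
    and mult: "\<And>g h. g \<in> carrier G \<Longrightarrow> h \<in> carrier G \<Longrightarrow> P g \<Longrightarrow> P h \<Longrightarrow> P (g \<otimes>\<^bsub>G\<^esub> h)"
  shows "P g"
proof -
  let ?S = "{h \<in> carrier G. P h}"
  interpret B: group "BijGroup A" by (rule group_BijGroup)
  interpret G: group G by (rule group_perm_group)
  have one_eq: "\<one>\<^bsub>BijGroup A\<^esub> = \<one>\<^bsub>G\<^esub>"
    by (simp add: perm_group_def)
  have "subgroup ?S (BijGroup A)"
  proof (rule B.subgroup_of_finite_submonoid)
    show "finite ?S"
      by (rule finite_subset[OF _ finite_Bij[OF finite_carrier]]) (use perm_group_in_Bij in blast)
    show "?S \<subseteq> carrier (BijGroup A)"
      using perm_group_in_Bij by (auto simp: BijGroup_def)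
    show "\<one>\<^bsub>BijGroup A\<^esub> \<in> ?S"
      unfolding one_eq using one G.one_closed by blast
    show "x \<otimes>\<^bsub>BijGroup A\<^esub> y \<in> ?S" if "x \<in> ?S" "y \<in> ?S" for x y
      unfolding perm_group_mult_eq[symmetric] using that mult G.m_closed by blast
  qed
  then have "generate (BijGroup A) (lmult A m ` A) \<subseteq> ?S"
    by (rule B.generate_subgroup_incl[rotated]) (use lmult lmult_in_perm_group in blast)
  then show ?thesis using g by (auto simp: perm_group_def)
qed

end

context cycset
begin

lemma cycle_congruence_Id_on: "cycle_congruence A m (Id_on A)"
  unfolding cycle_congruence_def using mult_closed by (auto simp: equiv_def refl_on_def sym_def trans_def)

lemma retract_rel_contains:
  assumes "cycle_congruence A m R"
  shows "R \<subseteq> retract_rel A m R"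
  using assms equiv_type[OF cycle_congruence_equiv[OF assms]] cycle_congruence_right[OF assms]
  unfolding retract_rel_def by blast

lemma cycle_congruence_retract_rel:
  assumes R: "cycle_congruence A m R"
  shows "cycle_congruence A m (retract_rel A m R)"
proof -
  let ?R' = "retract_rel A m R"
  have refl: "refl_on A R" and sym: "sym R" and trans: "trans R"
    using cycle_congruence_equiv[OF R] by (blast elim: equivE)+
  have "equiv A ?R'"
    unfolding retract_rel_def using mult_closed
    by (intro equivI refl_onI symI transI)
       (auto intro: refl_onD[OF refl] symD[OF sym] transD[OF trans])
  moreover have "(m x z, m y z) \<in> ?R'" if "(x, y) \<in> ?R'" "z \<in> A" for x y z
    using that retract_rel_contains[OF R] unfolding retract_rel_def by auto
  moreover have "(m z x, m z y) \<in> ?R'" if xy: "(x, y) \<in> ?R'" and z: "z \<in> A" for x y z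
  proof -
    have xyA: "x \<in> A" "y \<in> A" and xy_R: "\<And>u. u \<in> A \<Longrightarrow> (m x u, m y u) \<in> R"
      using xy unfolding retract_rel_def by auto
    have "(m (m z x) w, m (m z y) w) \<in> R" if w: "w \<in> A" for w
    proof -
      obtain u where u: "u \<in> A" "w = m z u"
        using w bij_lmult[OF z] unfolding bij_betw_def by blast
      have "(m (m x z) (m x u), m (m y z) (m x u)) \<in> R"
        using cycle_congruence_right[OF R xy_R[OF z]] mult_closed xyA u by blast
      moreover have "(m (m y z) (m x u), m (m y z) (m y u)) \<in> R"
        using cycle_congruence_left[OF R xy_R[OF u(1)]] mult_closed xyA z by blast
      moreover have "m (m z x) w = m (m x z) (m x u)" "m (m z y) w = m (m y z) (m y u)"
        using cycle_identity[OF z _ u(1)] xyA u(2) by simp_all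
      ultimately show ?thesis
        using trans by (metis transD)
    qed
    then show ?thesis
      unfolding retract_rel_def using mult_closed xyA z by auto
  qed
  ultimately show ?thesis
    unfolding cycle_congruence_def by blast
qed

lemma ret_rel_0: "ret_rel A m 0 = Id_on A"
  by (auto simp: ret_rel_def Id_on_def)

lemma ret_rel_Suc: "ret_rel A m (Suc n) = retract_rel A m (ret_rel A m n)"
  using mult_closed by (auto simp: ret_rel_def retract_rel_def)

lemma cycle_congruence_ret_rel: "cycle_congruence A m (ret_rel A m n)"
  by (induction n)
     (simp_all add: ret_rel_0 ret_rel_Suc cycle_congruence_Id_on cycle_congruence_retract_rel)

lemma lmult_acts_trivially_closed:
  assumes R: "cycle_congruence A m R"
    and w: "w \<in> A" "\<And>z. z \<in> A \<Longrightarrow> (m w z, z) \<in> R" and y: "y \<in> A" and z: "z \<in> A"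
  shows "(m (m y w) z, z) \<in> R"
proof -
  obtain u where u: "u \<in> A" "z = m y u"
    using z bij_lmult[OF y] unfolding bij_betw_def by blast
  have "(m (m w y) (m w u), m y (m w u)) \<in> R"
    using cycle_congruence_right[OF R w(2)[OF y]] mult_closed w(1) u(1) by blast
  moreover have "(m y (m w u), m y u) \<in> R"
    using cycle_congruence_left[OF R w(2)[OF u(1)] y] .
  moreover have "m (m y w) z = m (m w y) (m w u)"
    using cycle_identity[OF y w(1) u(1)] u(2) by simp
  ultimately show ?thesis
    using u(2) cycle_congruence_equiv[OF R] by (metis equivE transD)
qed

end

context finite_cycset
begin

lemma perm_group_preserves_congruence:
  assumes R: "cycle_congruence A m R" and g: "g \<in> carrier G" and ab: "(a, b) \<in> R"
  shows "(g a, g b) \<in> R"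
proof -
  have RA: "R \<subseteq> A \<times> A"
    using equiv_type[OF cycle_congruence_equiv[OF R]] .
  have "\<forall>a b. (a, b) \<in> R \<longrightarrow> (g a, g b) \<in> R"
    using g
  proof (induction rule: perm_group_induct)
    case one
    show ?case using RA by (auto simp: perm_group_one_apply)
  next
    case (lmult x)
    show ?case using RA cycle_congruence_left[OF R _ lmult] by (auto simp: lmult_def)
  next
    case (mult g h)
    show ?case using RA mult(3,4) by (auto simp: perm_group_mult_apply[OF mult(1,2)])
  qed
  then show ?thesis using ab by blast
qed

lemma lmult_invariant_subset_eq:
  assumes transitive: "perm_group_transitive A m"
    and Z: "Z \<subseteq> A" "x \<in> Z" and closed: "\<And>y w. y \<in> A \<Longrightarrow> w \<in> Z \<Longrightarrow> m y w \<in> Z"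
  shows "Z = A"
proof -
  have invariant: "\<forall>w\<in>Z. g w \<in> Z" if "g \<in> carrier G" for g
    using that
  proof (induction rule: perm_group_induct)
    case one
    show ?case using Z by (auto simp: perm_group_one_apply)
  next
    case (lmult y)
    show ?case using Z closed[OF lmult] by (auto simp: lmult_def)
  next
    case (mult g h)
    show ?case using Z mult(3,4) by (auto simp: perm_group_mult_apply[OF mult(1,2)])
  qed
  have "A \<subseteq> Z"
  proof
    fix a assume "a \<in> A"
    then obtain g where "g \<in> carrier G" "g x = a"
      using transitive Z unfolding perm_group_transitive_def by blast
    then show "a \<in> Z"
      using invariant Z(2) by blast
  qed
  then show ?thesis
    using Z(1) by blast
qed

lemma total_if_lmult_trivial:
  assumes transitive: "perm_group_transitive A m" and R: "equiv A R"
    and trivial: "\<And>y z. y \<in> A \<Longrightarrow> z \<in> A \<Longrightarrow> (m y z, z) \<in> R"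
  shows "A \<times> A \<subseteq> R"
proof -
  have refl: "refl_on A R" and trans: "trans R"
    using R by (blast elim: equivE)+
  have trivial_action: "\<forall>z\<in>A. (g z, z) \<in> R" if "g \<in> carrier G" for g
    using that
  proof (induction rule: perm_group_induct)
    case one
    show ?case using refl_onD[OF refl] by (simp add: perm_group_one_apply)
  next
    case (lmult y)
    show ?case using trivial[OF lmult] by (simp add: lmult_def)
  next
    case (mult g h)
    show ?case
    proof
      fix z assume z: "z \<in> A"
      have "(g (h z), h z) \<in> R" "(h z, z) \<in> R"
        using mult(3,4) perm_group_apply_closed[OF mult(2) z] z by blast+
      then show "((g \<otimes>\<^bsub>G\<^esub> h) z, z) \<in> R"
        using transD[OF trans] perm_group_mult_apply[OF mult(1,2) z] by simp
    qed
  qed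
  show ?thesis
  proof clarify
    fix a b assume "a \<in> A" "b \<in> A"
    then obtain g where "g \<in> carrier G" "g b = a"
      using transitive unfolding perm_group_transitive_def by blast
    then show "(a, b) \<in> R"
      using trivial_action \<open>b \<in> A\<close> by blast
  qed
qed

end

locale dedekind_cycset = finite_cycset +
  assumes transitive: "perm_group_transitive A m"
    and dedekind: "dedekind_group (perm_group A m)"
begin

context
  fixes R
  assumes R: "cycle_congruence A m R"
begin

lemma block_stabilizer_subgroup:
  assumes x0: "x0 \<in> A"
  shows "subgroup (block_stabilizer A m R x0) G"
proof -
  interpret G: group G by (rule group_perm_group)
  have refl: "refl_on A R" and sym: "sym R" and trans: "trans R"
    using cycle_congruence_equiv[OF R] by (blast elim: equivE)+
  show ?thesis
  proof (rule G.subgroupI)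
    show "block_stabilizer A m R x0 \<noteq> {}"
      using perm_group_one_apply[OF x0] refl_onD[OF refl x0]
      unfolding block_stabilizer_def by force
  next
    fix g assume "g \<in> block_stabilizer A m R x0"
    then have g: "g \<in> carrier G" "(g x0, x0) \<in> R"
      unfolding block_stabilizer_def by auto
    have "((inv\<^bsub>G\<^esub> g) (g x0), (inv\<^bsub>G\<^esub> g) x0) \<in> R"
      using perm_group_preserves_congruence[OF R G.inv_closed[OF g(1)] g(2)] .
    then show "inv\<^bsub>G\<^esub> g \<in> block_stabilizer A m R x0"
      using perm_group_inv_apply(1)[OF g(1) x0] g(1) symD[OF sym]
      unfolding block_stabilizer_def by auto
  next
    fix g h assume "g \<in> block_stabilizer A m R x0" "h \<in> block_stabilizer A m R x0"
    then have gh: "g \<in> carrier G" "(g x0, x0) \<in> R" "h \<in> carrier G" "(h x0, x0) \<in> R"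
      unfolding block_stabilizer_def by auto
    have "(g (h x0), g x0) \<in> R"
      using perm_group_preserves_congruence[OF R gh(1,4)] .
    then show "g \<otimes>\<^bsub>G\<^esub> h \<in> block_stabilizer A m R x0"
      using gh perm_group_mult_apply[OF gh(1,3) x0] transD[OF trans]
      unfolding block_stabilizer_def by auto
  qed (auto simp: block_stabilizer_def)
qed

text \<open>Normality of the stabilizer of the block of \<open>x0\<close> makes it the stabilizer of every block,
  since all stabilizers of blocks are conjugate under the transitive action.\<close>
lemma block_stabilizer_acts_trivially:
  assumes x0: "x0 \<in> A" and g: "g \<in> block_stabilizer A m R x0" and z: "z \<in> A"
  shows "(g z, z) \<in> R"
proof -
  interpret G: group G by (rule group_perm_group)
  have normal: "block_stabilizer A m R x0 \<lhd> G"
    using dedekind block_stabilizer_subgroup[OF x0] unfolding dedekind_group_def by blast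
  obtain t where t: "t \<in> carrier G" "t x0 = z"
    using transitive x0 z unfolding perm_group_transitive_def by blast
  let ?k = "inv\<^bsub>G\<^esub> t \<otimes>\<^bsub>G\<^esub> g \<otimes>\<^bsub>G\<^esub> t"
  have g_carrier: "g \<in> carrier G"
    using g unfolding block_stabilizer_def by blast
  have "?k \<in> block_stabilizer A m R x0"
    using normal.inv_op_closed1[OF normal t(1) g] .
  then have "(t (?k x0), t x0) \<in> R"
    using perm_group_preserves_congruence[OF R t(1)] unfolding block_stabilizer_def by blast
  moreover have "t (?k x0) = g z"
    using t g_carrier x0 z perm_group_mult_apply perm_group_inv_apply(2) perm_group_apply_closed
    by simp
  ultimately show ?thesis
    using t(2) by simp
qed

lemma retract_rel_if_lmult_related:
  assumes x0: "x0 \<in> A" and xy: "x \<in> A" "y \<in> A" and related: "(m x x0, m y x0) \<in> R"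
  shows "(x, y) \<in> retract_rel A m R"
proof -
  interpret G: group G by (rule group_perm_group)
  have sym: "sym R"
    using cycle_congruence_equiv[OF R] by (blast elim: equivE)
  let ?\<sigma>x = "lmult A m x" and ?\<sigma>y = "lmult A m y"
  let ?k = "inv\<^bsub>G\<^esub> ?\<sigma>x \<otimes>\<^bsub>G\<^esub> ?\<sigma>y"
  have \<sigma>: "?\<sigma>x \<in> carrier G" "?\<sigma>y \<in> carrier G"
    using lmult_in_perm_group xy by auto
  have k: "?k \<in> carrier G"
    using \<sigma> by simp
  have k_apply: "?k z = (inv\<^bsub>G\<^esub> ?\<sigma>x) (m y z)" if "z \<in> A" for z
    using perm_group_mult_apply[OF G.inv_closed[OF \<sigma>(1)] \<sigma>(2) that] that by (simp add: lmult_def)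
  have "((inv\<^bsub>G\<^esub> ?\<sigma>x) (m y x0), (inv\<^bsub>G\<^esub> ?\<sigma>x) (?\<sigma>x x0)) \<in> R"
    using perm_group_preserves_congruence[OF R G.inv_closed[OF \<sigma>(1)]] related symD[OF sym] x0
    by (simp add: lmult_def)
  then have "(?k x0, x0) \<in> R"
    using k_apply[OF x0] perm_group_inv_apply(1)[OF \<sigma>(1) x0] by simp
  then have "(?k z, z) \<in> R" if "z \<in> A" for z
    using block_stabilizer_acts_trivially[OF x0 _ that] k unfolding block_stabilizer_def by blast
  then have "(m x (?k z), m x z) \<in> R" if "z \<in> A" for z
    using cycle_congruence_left[OF R _ xy(1)] that by blast
  moreover have "m x (?k z) = m y z" if "z \<in> A" for z
    using perm_group_inv_apply(2)[OF \<sigma>(1) mult_closed[OF xy(2) that]]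
      perm_group_apply_closed[OF G.inv_closed[OF \<sigma>(1)] mult_closed[OF xy(2) that]]
      k_apply[OF that]
    by (simp add: lmult_def)
  ultimately show ?thesis
    unfolding retract_rel_def using xy symD[OF sym] by auto
qed

lemma total_if_lmult_fixes_block:
  assumes x0: "x0 \<in> A" and x: "x \<in> A" and fixes_block: "(m x x0, x0) \<in> R"
  shows "A \<times> A \<subseteq> R"
proof -
  let ?Z = "{w \<in> A. \<forall>z\<in>A. (m w z, z) \<in> R}"
  have "lmult A m x \<in> block_stabilizer A m R x0"
    using lmult_in_perm_group[OF x] fixes_block x0 by (simp add: block_stabilizer_def lmult_def)
  then have "(lmult A m x z, z) \<in> R" if "z \<in> A" for z
    using block_stabilizer_acts_trivially[OF x0 _ that] by blast
  then have "x \<in> ?Z"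
    using x by (simp add: lmult_def)
  then have "?Z = A"
    by (rule lmult_invariant_subset_eq[OF transitive, rotated])
       (use lmult_acts_trivially_closed[OF R] mult_closed in auto)
  then show ?thesis
    using total_if_lmult_trivial[OF transitive cycle_congruence_equiv[OF R]] by blast
qed

lemma card_quotient_retract_rel_less:
  assumes nontotal: "\<not> A \<times> A \<subseteq> R"
  shows "card (A // retract_rel A m R) < card (A // R)"
proof -
  let ?R' = "retract_rel A m R"
  have equiv: "equiv A R" and equiv': "equiv A ?R'"
    using R cycle_congruence_retract_rel[OF R] by (simp_all add: cycle_congruence_equiv)
  obtain x0 where x0: "x0 \<in> A"
    using nontotal by auto
  define F where "F x = R `` {m x x0}" for x
  have "A // ?R' = (\<lambda>x. ?R' `` {x}) ` A"
    unfolding quotient_def by blast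
  also have "card \<dots> \<le> card (F ` A)"
  proof (rule card_image_le_if_factors[OF finite_carrier])
    fix x y assume xy: "x \<in> A" "y \<in> A" "F x = F y"
    then have "(m x x0, m y x0) \<in> R"
      unfolding F_def using eq_equiv_class_iff[OF equiv mult_closed[OF xy(1) x0] mult_closed[OF xy(2) x0]]
      by simp
    then show "?R' `` {x} = ?R' `` {y}"
      by (rule equiv_class_eq[OF equiv' retract_rel_if_lmult_related[OF x0 xy(1,2)]])
  qed
  also have "\<dots> \<le> card (A // R - {R `` {x0}})"
  proof (rule card_mono)
    show "finite (A // R - {R `` {x0}})"
      using finite_quotient[OF finite_carrier equiv_type[OF equiv]] by blast
    show "F ` A \<subseteq> A // R - {R `` {x0}}"
    proof
      fix c assume "c \<in> F ` A"
      then obtain x where x: "x \<in> A" "c = F x" by blast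
      have "F x \<noteq> R `` {x0}"
        using total_if_lmult_fixes_block[OF x0 x(1)] nontotal
          eq_equiv_class_iff[OF equiv mult_closed[OF x(1) x0] x0]
        unfolding F_def by blast
      moreover have "F x \<in> A // R"
        unfolding F_def using quotientI[OF mult_closed[OF x(1) x0]] .
      ultimately show "c \<in> A // R - {R `` {x0}}"
        using x(2) by blast
    qed
  qed
  also have "\<dots> < card (A // R)"
    using card_Diff1_less[OF finite_quotient[OF finite_carrier equiv_type[OF equiv]] quotientI[OF x0]] .
  finally show ?thesis .
qed

end

end

theorem mainTheorem7:
  fixes A :: "'a set" and m :: "'a \<Rightarrow> 'a \<Rightarrow> 'a"
  assumes "finite A"
    and "nondeg_cycle_set A m"
    and "uniconnected A m"
    and "dedekind_group (perm_group A m)"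
  shows "finite_mpl A m"
proof -
  interpret dedekind_cycset A m
    using assms uniconnected_imp_perm_group_transitive
    by unfold_locales (auto simp: nondeg_cycle_set_def)
  have nonempty: "A \<noteq> {}"
    using assms(3) unfolding uniconnected_def by blast
  have "card (Ret_iter A m (Suc n)) < card (Ret_iter A m n)" if ne: "card (Ret_iter A m n) \<noteq> 1" for n
  proof -
    have "\<not> A \<times> A \<subseteq> ret_rel A m n"
    proof
      assume "A \<times> A \<subseteq> ret_rel A m n"
      then have "Ret_iter A m n = {A}"
        unfolding Ret_iter_def
        by (rule quotient_eq_singleton_if_total[OF cycle_congruence_equiv[OF cycle_congruence_ret_rel] nonempty])
      then show False
        using ne by simp
    qed
    then show ?thesis
      unfolding Ret_iter_def ret_rel_Suc by (rule card_quotient_retract_rel_less[OF cycle_congruence_ret_rel])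
  qed
  then show ?thesis
    unfolding finite_mpl_def by (rule ex_eq_if_decreasing_while_neq)
qed

end
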